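(* Let $A$ be a real symmetric $n\times n$ matrix and suppose there exist $\alpha\in\mathbb{R}$ with $A+\alpha I\neq 0$ and an integer $k$ with $1\le k<n/2$ such that $$\mathbb{1}^\top A\mathbb{1}\ge\sqrt{(n-k)^2+k^2}\,\|A+\alpha I\|_F-n\alpha.$$ Then the largest (rightmost) eigenvalue of $A$ is simple, and a corresponding eigenvector can be chosen (up to sign) so that it has at least $n-k+1$ nonnegative entries.
   Context: $\mathbb{1}\in\mathbb{R}^n$ is the all-ones vector, $I$ the identity matrix, and $\|\cdot\|_F$ the Frobenius norm. *)

theory Defs
  imports "Jordan_Normal_Form.Char_Poly"
begin

definition frobenius_norm :: "real mat \<Rightarrow> real" where
  "frobenius_norm M = sqrt (\<Sum>i<dim_row M. \<Sum>j<dim_col M. (M $$ (i, j))\<^sup>2)"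

definition ones_form :: "real mat \<Rightarrow> real" where
  "ones_form M = (\<Sum>i<dim_row M. \<Sum>j<dim_col M. M $$ (i, j))"

end

theory Submission
  imports Defs "Jordan_Normal_Form.Spectral_Radius" "HOL-Analysis.Convex"
begin

text \<open>
  Diagonalise \<open>A + \<alpha>I = V diag(\<nu>) V\<^sup>T\<close> with \<open>V\<close> orthogonal. Writing \<open>c\<^sub>j\<close> for the column sums
  of \<open>V\<close>, we get \<open>\<Sum> c\<^sub>j\<^sup>2 = n\<close>, \<open>\<one>\<^sup>T(A + \<alpha>I)\<one> = \<Sum> \<nu>\<^sub>j c\<^sub>j\<^sup>2\<close> and
  \<open>\<parallel>A + \<alpha>I\<parallel>\<^sub>F\<^sup>2 = \<Sum> \<nu>\<^sub>j\<^sup>2\<close>. Let \<open>\<nu>\<^sub>p\<close> be a largest eigenvalue and \<open>R\<close> the Euclidean norm of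
  the remaining ones, so \<open>\<Sum> \<nu>\<^sub>j c\<^sub>j\<^sup>2 \<le> min (n \<nu>\<^sub>p) (\<nu>\<^sub>p c\<^sub>p\<^sup>2 + R (n - c\<^sub>p\<^sup>2))\<close>.
  Since \<open>n\<^sup>2 < 2 ((n - k)\<^sup>2 + k\<^sup>2)\<close>, the hypothesis is violated if \<open>\<nu>\<^sub>p \<le> R\<close>, which covers a
  repeated top eigenvalue, and, by Cauchy--Schwarz, also if \<open>c\<^sub>p\<^sup>2 < n - k\<close>.
  Finally, a unit vector whose entries have sum \<open>c\<^sub>p \<ge> \<surd>(n - k)\<close> has at most \<open>k - 1\<close>
  negative entries, again by Cauchy--Schwarz on its nonnegative entries.
\<close>

section \<open>Orthogonal diagonalisation of real symmetric matrices\<close>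

definition diag_mat_of :: "nat \<Rightarrow> (nat \<Rightarrow> 'a::zero) \<Rightarrow> 'a mat" where
  "diag_mat_of n f = mat n n (\<lambda>(i, j). if i = j then f i else 0)"

lemma diag_mat_of_carrier [simp]: "diag_mat_of n f \<in> carrier_mat n n"
  unfolding diag_mat_of_def by simp

lemma dim_diag_mat_of [simp]: "dim_row (diag_mat_of n f) = n" "dim_col (diag_mat_of n f) = n"
  unfolding diag_mat_of_def by simp_all

lemma index_diag_mat_of [simp]:
  "i < n \<Longrightarrow> j < n \<Longrightarrow> diag_mat_of n f $$ (i, j) = (if i = j then f i else 0)"
  unfolding diag_mat_of_def by simp

lemma diag_mat_of_one: "diag_mat_of n (\<lambda>_. 1) = 1\<^sub>m n"
  by (rule eq_matI) auto

lemma char_poly_diag_mat_of: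
  "char_poly (diag_mat_of n f :: 'a::comm_ring_1 mat) = (\<Prod>a\<leftarrow>map f [0..<n]. [:- a, 1:])"
proof -
  have "upper_triangular (diag_mat_of n f)"
    unfolding upper_triangular_def by simp
  moreover have "diag_mat (diag_mat_of n f) = map f [0..<n]"
    unfolding diag_mat_def by (auto intro: nth_equalityI)
  ultimately show ?thesis
    using char_poly_upper_triangular[OF diag_mat_of_carrier] by metis
qed

lemma eigenvalue_of_real_symmetric_is_real:
  fixes B :: "real mat"
  assumes B: "B \<in> carrier_mat n n" and sym: "transpose_mat B = B"
    and ev: "eigenvalue (map_mat complex_of_real B) z"
  shows "Im z = 0"
proof -
  define Bc where "Bc = map_mat complex_of_real B"
  have Bc: "Bc \<in> carrier_mat n n" using B unfolding Bc_def by auto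
  obtain w where "eigenvector Bc w z" using ev unfolding Bc_def eigenvalue_def by auto
  hence w: "w \<in> carrier_vec n" and w0: "w \<noteq> 0\<^sub>v n" and eq: "Bc *\<^sub>v w = z \<cdot>\<^sub>v w"
    using Bc unfolding eigenvector_def by auto
  have symB: "B $$ (i, j) = B $$ (j, i)" if "i < n" "j < n" for i j
    using sym B that by (metis carrier_matD index_transpose_mat(1))
  \<comment> \<open>The Hermitian form \<open>w\<^sup>* B w\<close> is real and equals \<open>z \<parallel>w\<parallel>\<^sup>2\<close>.\<close>
  define s where "s = (\<Sum>i<n. cnj (w $ i) * (\<Sum>j<n. of_real (B $$ (i, j)) * w $ j))"
  have comp: "(Bc *\<^sub>v w) $ i = (\<Sum>j<n. of_real (B $$ (i, j)) * w $ j)" if "i < n" for i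
    using w B that unfolding Bc_def by (auto simp: mult_mat_vec_def scalar_prod_def atLeast0LessThan)
  have "s = (\<Sum>i<n. cnj (w $ i) * (z * w $ i))"
    unfolding s_def using w by (intro sum.cong) (auto simp: comp[symmetric] eq)
  also have "\<dots> = z * (\<Sum>i<n. of_real ((cmod (w $ i))\<^sup>2))"
    unfolding sum_distrib_left
    by (intro sum.cong refl) (simp add: complex_norm_square[symmetric] mult.commute mult.left_commute)
  finally have s_eq: "s = z * of_real (\<Sum>i<n. (cmod (w $ i))\<^sup>2)" by simp
  have "cnj s = (\<Sum>j<n. \<Sum>i<n. w $ i * of_real (B $$ (i, j)) * cnj (w $ j))"
    unfolding s_def by (subst sum.swap) (simp add: sum_distrib_left mult.assoc)
  also have "\<dots> = s"
    unfolding s_def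
    by (intro sum.cong refl) (simp add: sum_distrib_left symB mult.commute mult.left_commute)
  finally have "Im s = 0" by (metis Reals_cnj_iff complex_is_Real_iff)
  obtain i where i: "i < n" "w $ i \<noteq> 0"
    using w w0 by (metis eq_vecI carrier_vecD index_zero_vec(1) index_zero_vec(2))
  have "(\<Sum>i<n. (cmod (w $ i))\<^sup>2) > 0"
    by (rule sum_pos2[of _ i]) (use i in auto)
  with \<open>Im s = 0\<close> s_eq show "Im z = 0" by simp
qed

lemma symmetric_real_mat_has_eigenvalue:
  fixes B :: "real mat"
  assumes B: "B \<in> carrier_mat n n" and sym: "transpose_mat B = B" and n: "0 < n"
  shows "\<exists>l. eigenvalue B l"
proof -
  define Bc where "Bc = map_mat complex_of_real B"
  have Bc: "Bc \<in> carrier_mat n n" using B unfolding Bc_def by auto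
  from spectrum_non_empty[OF Bc n] obtain z where ev_z: "eigenvalue Bc z"
    unfolding spectrum_def by auto
  hence z: "z = of_real (Re z)"
    using eigenvalue_of_real_symmetric_is_real[OF B sym] unfolding Bc_def by (simp add: complex_eq_iff)
  have "poly (char_poly Bc) z = 0"
    using ev_z eigenvalue_root_char_poly[OF Bc] by simp
  also have "char_poly Bc = map_poly of_real (char_poly B)"
    unfolding Bc_def by (rule of_real_hom.char_poly_hom[OF B])
  finally have "poly (map_poly of_real (char_poly B)) (of_real (Re z)) = (0::complex)"
    using z by metis
  hence "poly (char_poly B) (Re z) = 0" by simp
  thus ?thesis using eigenvalue_root_char_poly[OF B] by blast
qed

definition householder_mat :: "nat \<Rightarrow> (nat \<Rightarrow> 'a::field) \<Rightarrow> 'a mat" where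
  "householder_mat n w = mat n n (\<lambda>(i, j). (if i = j then 1 else 0) - 2 / (\<Sum>k<n. (w k)\<^sup>2) * w i * w j)"

lemma householder_mat_carrier [simp]: "householder_mat n w \<in> carrier_mat n n"
  unfolding householder_mat_def by simp

lemma dim_householder_mat [simp]:
  "dim_row (householder_mat n w) = n" "dim_col (householder_mat n w) = n"
  unfolding householder_mat_def by simp_all

lemma transpose_householder_mat: "transpose_mat (householder_mat n w) = householder_mat n w"
  unfolding householder_mat_def by (rule eq_matI) auto

lemma householder_mat_involution:
  assumes S: "(\<Sum>k<n. (w k)\<^sup>2) \<noteq> 0"
  shows "householder_mat n w * householder_mat n w = 1\<^sub>m n"
proof (rule eq_matI)
  define S where "S = (\<Sum>k<n. (w k)\<^sup>2)"
  define c where "c = 2 / S"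
  have cS: "c * c * S = 2 * c" unfolding c_def S_def using S by (simp add: field_simps)
  define H where "H = householder_mat n w"
  have H: "H $$ (i, j) = (if i = j then 1 else 0) - c * w i * w j" if "i < n" "j < n" for i j
    unfolding H_def householder_mat_def c_def S_def using that by simp
  have Hc: "H \<in> carrier_mat n n" unfolding H_def by simp
  fix i j assume "i < dim_row (1\<^sub>m n)" and "j < dim_col (1\<^sub>m n)"
  hence i: "i < n" and j: "j < n" by auto
  have "(H * H) $$ (i, j) = (\<Sum>k<n. ((if i = k then 1 else 0) - c * w i * w k) * ((if k = j then 1 else 0) - c * w k * w j))"
    using i j Hc by (auto simp: H scalar_prod_def atLeast0LessThan intro!: sum.cong)
  also have "\<dots> = (\<Sum>k<n. if i = k then (if k = j then 1 else 0) - c * w k * w j else 0)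
      - (\<Sum>k<n. if k = j then c * w i * w k else 0) + (\<Sum>k<n. c * c * w i * w j * (w k)\<^sup>2)"
    unfolding sum_subtractf[symmetric] sum.distrib[symmetric]
    by (rule sum.cong) (auto simp: algebra_simps power2_eq_square)
  also have "\<dots> = (if i = j then 1 else 0) - 2 * (c * w i * w j) + c * c * S * w i * w j"
    using i j unfolding S_def by (simp add: sum.delta sum.delta' sum_distrib_left[symmetric] algebra_simps)
  also have "\<dots> = 1\<^sub>m n $$ (i, j)" using i j cS by (simp, blast)
  finally show "(householder_mat n w * householder_mat n w) $$ (i, j) = 1\<^sub>m n $$ (i, j)"
    unfolding H_def .
qed auto

lemma reflection_with_first_column:
  fixes v :: "real vec"
  assumes unit: "(\<Sum>i<n. (v $ i)\<^sup>2) = 1" and n: "0 < n"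
  obtains H where "H \<in> carrier_mat n n" "transpose_mat H = H" "H * H = 1\<^sub>m n"
    "\<And>i. i < n \<Longrightarrow> H $$ (i, 0) = v $ i"
proof (cases "\<forall>i<n. v $ i = (if i = 0 then 1 else 0)")
  case True
  thus ?thesis by (intro that[of "1\<^sub>m n"]) auto
next
  case False
  \<comment> \<open>the reflection along \<open>w = v - e\<^sub>0\<close> swaps \<open>e\<^sub>0\<close> and the unit vector \<open>v\<close>\<close>
  define w where "w = (\<lambda>i. v $ i - (if i = 0 then 1 else (0::real)))"
  define S where "S = (\<Sum>k<n. (w k)\<^sup>2)"
  from False obtain i0 where i0: "i0 < n" "w i0 \<noteq> 0" unfolding w_def by auto
  have S_pos: "S > 0" unfolding S_def by (rule sum_pos2[of _ i0]) (use i0 in auto)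
  have "S = (\<Sum>k<n. (v $ k)\<^sup>2) - (\<Sum>k<n. if k = 0 then 2 * v $ k else 0) + (\<Sum>k<n. if k = 0 then 1 else 0)"
    unfolding S_def w_def sum_subtractf[symmetric] sum.distrib[symmetric]
    by (rule sum.cong) (auto simp: power2_eq_square algebra_simps)
  also have "\<dots> = 2 - 2 * v $ 0"
    using n unit by (simp add: sum.delta)
  finally have S: "S = 2 - 2 * v $ 0" .
  have "householder_mat n w $$ (i, 0) = v $ i" if i: "i < n" for i
  proof -
    have "2 / S * w 0 = -1" unfolding w_def using S S_pos by (simp add: field_simps)
    moreover have "householder_mat n w $$ (i, 0) = (if i = 0 then 1 else 0) - w i * (2 / S * w 0)"
      unfolding householder_mat_def S_def using i n by simp
    ultimately show ?thesis unfolding w_def by simp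
  qed
  with S_pos show ?thesis
    by (intro that[of "householder_mat n w"])
      (auto simp: transpose_householder_mat householder_mat_involution S_def)
qed

lemma symmetric_real_mat_unit_eigenvector:
  fixes B :: "real mat"
  assumes B: "B \<in> carrier_mat n n" and sym: "transpose_mat B = B" and n: "0 < n"
  obtains l v where "v \<in> carrier_vec n" "(\<Sum>i<n. (v $ i)\<^sup>2) = 1" "B *\<^sub>v v = l \<cdot>\<^sub>v v"
proof -
  obtain l u where "eigenvector B u l"
    using symmetric_real_mat_has_eigenvalue[OF B sym n] unfolding eigenvalue_def by auto
  hence u: "u \<in> carrier_vec n" and u0: "u \<noteq> 0\<^sub>v n" and Bu: "B *\<^sub>v u = l \<cdot>\<^sub>v u"
    using B unfolding eigenvector_def by auto
  define N where "N = (\<Sum>i<n. (u $ i)\<^sup>2)"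
  obtain i0 where i0: "i0 < n" "u $ i0 \<noteq> 0"
    using u u0 by (metis eq_vecI carrier_vecD index_zero_vec(1) index_zero_vec(2))
  have N_pos: "N > 0" unfolding N_def by (rule sum_pos2[of _ i0]) (use i0 in auto)
  define v where "v = (1 / sqrt N) \<cdot>\<^sub>v u"
  have "(\<Sum>i<n. (v $ i)\<^sup>2) = (\<Sum>i<n. (u $ i)\<^sup>2 / N)"
    unfolding v_def using u N_pos by (intro sum.cong) (auto simp: power_divide)
  also have "\<dots> = 1" unfolding sum_divide_distrib[symmetric] N_def[symmetric] using N_pos by simp
  finally have "(\<Sum>i<n. (v $ i)\<^sup>2) = 1" .
  moreover have "B *\<^sub>v v = l \<cdot>\<^sub>v v"
    unfolding v_def using mult_mat_vec[OF B u] Bu by (auto simp: smult_smult_assoc mult.commute)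
  moreover have "v \<in> carrier_vec n" unfolding v_def using u by auto
  ultimately show ?thesis using that by blast
qed

lemma symmetric_mat_reflection_deflates:
  fixes B :: "real mat"
  assumes B: "B \<in> carrier_mat n n" and sym: "transpose_mat B = B" and n: "0 < n"
  obtains H l where "H \<in> carrier_mat n n" "transpose_mat H = H" "H * H = 1\<^sub>m n"
    "\<And>i. i < n \<Longrightarrow> (H * B * H) $$ (i, 0) = (if i = 0 then l else 0)"
proof -
  obtain l v where v: "v \<in> carrier_vec n" and v_unit: "(\<Sum>i<n. (v $ i)\<^sup>2) = 1"
    and Bv: "B *\<^sub>v v = l \<cdot>\<^sub>v v"
    using symmetric_real_mat_unit_eigenvector[OF B sym n] by blast
  obtain H where H: "H \<in> carrier_mat n n" and Ht: "transpose_mat H = H"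
    and HH: "H * H = 1\<^sub>m n" and H_col: "\<And>i. i < n \<Longrightarrow> H $$ (i, 0) = v $ i"
    using reflection_with_first_column[OF v_unit n] by blast
  define e :: "real vec" where "e = unit_vec n 0"
  have e: "e \<in> carrier_vec n" unfolding e_def by auto
  have col_e: "M *\<^sub>v e = vec n (\<lambda>i. M $$ (i, 0))" if "M \<in> carrier_mat n n" for M :: "real mat"
    unfolding e_def by (rule eq_vecI) (use that n in auto)
  have He: "H *\<^sub>v e = v" using col_e[OF H] H_col v by (auto intro!: eq_vecI)
  have Hv: "H *\<^sub>v v = e" using He HH H e by (metis assoc_mult_mat_vec one_mult_mat_vec)
  have "(H * B * H) *\<^sub>v e = (H * B) *\<^sub>v (H *\<^sub>v e)"
    by (rule assoc_mult_mat_vec) (use H B e in auto)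
  also have "\<dots> = H *\<^sub>v (B *\<^sub>v (H *\<^sub>v e))"
    by (rule assoc_mult_mat_vec) (use H B e in auto)
  also have "\<dots> = l \<cdot>\<^sub>v e" unfolding He Bv mult_mat_vec[OF H v] Hv ..
  finally have "(H * B * H) $$ (i, 0) = (l \<cdot>\<^sub>v e) $ i" if "i < n" for i
    using col_e[of "H * B * H"] H B that by (metis index_vec mult_carrier_mat)
  hence "(H * B * H) $$ (i, 0) = (if i = 0 then l else 0)" if "i < n" for i
    using that unfolding e_def by simp
  with H Ht HH show ?thesis using that by blast
qed

lemma symmetric_mat_first_column_block:
  fixes M :: "'a::comm_ring_1 mat"
  assumes M: "M \<in> carrier_mat (Suc m) (Suc m)" and sym: "transpose_mat M = M"
    and col: "\<And>i. i < Suc m \<Longrightarrow> M $$ (i, 0) = (if i = 0 then l else 0)"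
  obtains M' where "M' \<in> carrier_mat m m" "transpose_mat M' = M'"
    "M = four_block_mat (mat 1 1 (\<lambda>_. l)) (0\<^sub>m 1 m) (0\<^sub>m m 1) M'"
proof -
  have symM: "M $$ (i, j) = M $$ (j, i)" if "i < Suc m" "j < Suc m" for i j
    using sym M that by (metis carrier_matD index_transpose_mat(1))
  obtain M1 M2 M3 M4 where split: "split_block M 1 1 = (M1, M2, M3, M4)"
    by (cases "split_block M 1 1") auto
  have "dim_row M = 1 + m" "dim_col M = 1 + m" using M by auto
  note blocks = split_block[OF split this]
  have "M1 = mat 1 1 (\<lambda>_. l)" "M2 = 0\<^sub>m 1 m" "M3 = 0\<^sub>m m 1"
    using split col symM[of 0] M unfolding split_block_def Let_def by (auto intro!: eq_matI)
  moreover have "transpose_mat M4 = M4"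
    using split symM M unfolding split_block_def Let_def by (auto intro!: eq_matI)
  ultimately show ?thesis using that blocks by auto
qed

lemma orthogonal_diag_four_block:
  fixes V' :: "'a::comm_ring_1 mat"
  assumes V': "V' \<in> carrier_mat m m" and orth: "transpose_mat V' * V' = 1\<^sub>m m"
  obtains V where "V \<in> carrier_mat (Suc m) (Suc m)" "transpose_mat V * V = 1\<^sub>m (Suc m)"
    "four_block_mat (mat 1 1 (\<lambda>_. l)) (0\<^sub>m 1 m) (0\<^sub>m m 1) (V' * diag_mat_of m f * transpose_mat V')
       = V * diag_mat_of (Suc m) (case_nat l f) * transpose_mat V"
proof -
  define V where "V = four_block_mat (1\<^sub>m 1) (0\<^sub>m 1 m) (0\<^sub>m m 1) V'"
  have V: "V \<in> carrier_mat (Suc m) (Suc m)" unfolding V_def using V' by auto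
  have Vt: "transpose_mat V = four_block_mat (1\<^sub>m 1) (0\<^sub>m 1 m) (0\<^sub>m m 1) (transpose_mat V')"
    unfolding V_def by (subst transpose_four_block_mat) (use V' in auto)
  have D: "diag_mat_of (Suc m) (case_nat l f)
      = four_block_mat (mat 1 1 (\<lambda>_. l)) (0\<^sub>m 1 m) (0\<^sub>m m 1) (diag_mat_of m f)"
    by (rule eq_matI) (auto split: nat.split)
  have "transpose_mat V * V = 1\<^sub>m (Suc m)"
    unfolding Vt unfolding V_def
    by (subst mult_four_block_mat[of _ 1 1 _ m _ m _ _ 1 _ m]) (use V' orth in auto)
  moreover have "V * diag_mat_of (Suc m) (case_nat l f) * transpose_mat V
      = four_block_mat (mat 1 1 (\<lambda>_. l)) (0\<^sub>m 1 m) (0\<^sub>m m 1) (V' * diag_mat_of m f * transpose_mat V')"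
    unfolding D Vt unfolding V_def
    by (subst mult_four_block_mat[of _ 1 1 _ m _ m _ _ 1 _ m], use V' in auto,
        subst mult_four_block_mat[of _ 1 1 _ m _ m _ _ 1 _ m], use V' in auto)
  ultimately show ?thesis using V that by auto
qed

lemma orthogonal_diag_conj_involution:
  fixes H :: "'a::comm_ring_1 mat"
  assumes H: "H \<in> carrier_mat n n" and Ht: "transpose_mat H = H" and HH: "H * H = 1\<^sub>m n"
    and B: "B \<in> carrier_mat n n" and V: "V \<in> carrier_mat n n" and D: "D \<in> carrier_mat n n"
    and orth: "transpose_mat V * V = 1\<^sub>m n" and conj: "H * B * H = V * D * transpose_mat V"
  shows "transpose_mat (H * V) * (H * V) = 1\<^sub>m n"
    and "B = (H * V) * D * transpose_mat (H * V)"
proof -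
  have HVt: "transpose_mat (H * V) = transpose_mat V * H"
    using transpose_mult[OF H V] Ht by simp
  have "transpose_mat V * H * (H * V) = transpose_mat V * ((H * H) * V)"
    using H V by (simp add: assoc_mult_mat[of _ n n _ n _ n])
  thus "transpose_mat (H * V) * (H * V) = 1\<^sub>m n"
    unfolding HVt HH using V orth by simp
  have "H * (H * B * H) * H = (H * H) * B * (H * H)"
    using H B by (simp add: assoc_mult_mat[of _ n n _ n _ n])
  hence "B = H * (H * B * H) * H"
    unfolding HH using B by simp
  also have "\<dots> = (H * V) * D * transpose_mat (H * V)"
    unfolding conj HVt using H V D by (simp add: assoc_mult_mat[of _ n n _ n _ n])
  finally show "B = (H * V) * D * transpose_mat (H * V)" .
qed

theorem real_symmetric_orthogonal_diagonalization:
  fixes B :: "real mat"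
  assumes "B \<in> carrier_mat n n" and "transpose_mat B = B"
  shows "\<exists>V f. V \<in> carrier_mat n n \<and> transpose_mat V * V = 1\<^sub>m n
           \<and> B = V * diag_mat_of n f * transpose_mat V"
  using assms
proof (induction n arbitrary: B)
  case 0
  thus ?case by (intro exI[of _ "1\<^sub>m 0"] exI[of _ "\<lambda>_. 0"]) auto
next
  case (Suc m B)
  hence B: "B \<in> carrier_mat (Suc m) (Suc m)" and sym: "transpose_mat B = B" by auto
  \<comment> \<open>a reflection taking a unit eigenvector to \<open>e\<^sub>0\<close> splits off a \<open>1 \<times> 1\<close> block\<close>
  obtain H l where H: "H \<in> carrier_mat (Suc m) (Suc m)" and Ht: "transpose_mat H = H"
    and HH: "H * H = 1\<^sub>m (Suc m)"
    and col: "\<And>i. i < Suc m \<Longrightarrow> (H * B * H) $$ (i, 0) = (if i = 0 then l else 0)"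
    using symmetric_mat_reflection_deflates[OF B sym] by blast
  have "transpose_mat (H * B * H) = transpose_mat H * transpose_mat (H * B)"
    by (rule transpose_mult) (use H B in auto)
  also have "transpose_mat (H * B) = transpose_mat B * transpose_mat H"
    by (rule transpose_mult[OF H B])
  finally have "transpose_mat (H * B * H) = H * B * H"
    unfolding Ht sym using H B by (simp add: assoc_mult_mat[of _ "Suc m" "Suc m" _ "Suc m" _ "Suc m"])
  then obtain M' where M': "M' \<in> carrier_mat m m" "transpose_mat M' = M'"
    and block: "H * B * H = four_block_mat (mat 1 1 (\<lambda>_. l)) (0\<^sub>m 1 m) (0\<^sub>m m 1) M'"
    using symmetric_mat_first_column_block[of "H * B * H" m l] col H B by auto
  obtain V' f where V': "V' \<in> carrier_mat m m" "transpose_mat V' * V' = 1\<^sub>m m"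
    and M'_diag: "M' = V' * diag_mat_of m f * transpose_mat V'"
    using Suc.IH[OF M'] by blast
  obtain V where V: "V \<in> carrier_mat (Suc m) (Suc m)" "transpose_mat V * V = 1\<^sub>m (Suc m)"
    and conj: "H * B * H = V * diag_mat_of (Suc m) (case_nat l f) * transpose_mat V"
    using orthogonal_diag_four_block[OF V', of l f] unfolding block M'_diag by blast
  moreover have "H * V \<in> carrier_mat (Suc m) (Suc m)" using H V by simp
  ultimately show ?case
    using orthogonal_diag_conj_involution[OF H Ht HH B V(1) diag_mat_of_carrier V(2) conj] by blast
qed

section \<open>Orthogonally diagonalised matrices\<close>

lemma index_mult_diag_mat_of_transpose:
  fixes V :: "'a::comm_ring_1 mat"
  assumes V: "V \<in> carrier_mat n n" and i: "i < n" and j: "j < n"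
  shows "(V * diag_mat_of n f * transpose_mat V) $$ (i, j) = (\<Sum>k<n. V $$ (i, k) * f k * V $$ (j, k))"
proof -
  have VD: "(V * diag_mat_of n f) $$ (i, k) = V $$ (i, k) * f k" if k: "k < n" for k
  proof -
    have "(V * diag_mat_of n f) $$ (i, k) = (\<Sum>l<n. V $$ (i, l) * (if l = k then f l else 0))"
      using V i k by (auto simp: scalar_prod_def atLeast0LessThan intro!: sum.cong)
    also have "\<dots> = V $$ (i, k) * f k" using k by (simp add: if_distrib sum.delta' cong: if_cong)
    finally show ?thesis .
  qed
  have "(V * diag_mat_of n f * transpose_mat V) $$ (i, j) = (\<Sum>k<n. (V * diag_mat_of n f) $$ (i, k) * V $$ (j, k))"
    using V i j by (auto simp: scalar_prod_def atLeast0LessThan intro!: sum.cong)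
  also have "\<dots> = (\<Sum>k<n. V $$ (i, k) * f k * V $$ (j, k))" by (rule sum.cong) (auto simp: VD)
  finally show ?thesis .
qed

lemma orthogonal_mat_col_inner:
  fixes V :: "'a::comm_ring_1 mat"
  assumes V: "V \<in> carrier_mat n n" and orth: "transpose_mat V * V = 1\<^sub>m n" and k: "k < n" and l: "l < n"
  shows "(\<Sum>i<n. V $$ (i, k) * V $$ (i, l)) = (if k = l then 1 else 0)"
proof -
  have "(transpose_mat V * V) $$ (k, l) = (\<Sum>i<n. V $$ (i, k) * V $$ (i, l))"
    using V k l by (auto simp: scalar_prod_def atLeast0LessThan intro!: sum.cong)
  thus ?thesis using orth k l by simp
qed

lemma orthogonal_mat_row_inner:
  fixes V :: "'a::field mat"
  assumes V: "V \<in> carrier_mat n n" and orth: "transpose_mat V * V = 1\<^sub>m n" and i: "i < n" and j: "j < n"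
  shows "(\<Sum>k<n. V $$ (i, k) * V $$ (j, k)) = (if i = j then 1 else 0)"
proof -
  have "V * transpose_mat V = 1\<^sub>m n"
    by (rule mat_mult_left_right_inverse[of "transpose_mat V" n V]) (use V orth in auto)
  moreover have "(V * transpose_mat V) $$ (i, j) = (\<Sum>k<n. V $$ (i, k) * V $$ (j, k))"
    using V i j by (auto simp: scalar_prod_def atLeast0LessThan intro!: sum.cong)
  ultimately show ?thesis using i j by simp
qed

lemma orthogonal_diag_add_smult_one:
  fixes V :: "'a::field mat"
  assumes V: "V \<in> carrier_mat n n" and orth: "transpose_mat V * V = 1\<^sub>m n"
  shows "V * diag_mat_of n f * transpose_mat V + a \<cdot>\<^sub>m 1\<^sub>m n = V * diag_mat_of n (\<lambda>k. f k + a) * transpose_mat V"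
proof (rule eq_matI)
  fix i j assume "i < dim_row (V * diag_mat_of n (\<lambda>k. f k + a) * transpose_mat V)"
    and "j < dim_col (V * diag_mat_of n (\<lambda>k. f k + a) * transpose_mat V)"
  hence i: "i < n" and j: "j < n" using V by auto
  have "(V * diag_mat_of n f * transpose_mat V + a \<cdot>\<^sub>m 1\<^sub>m n) $$ (i, j)
      = (V * diag_mat_of n f * transpose_mat V) $$ (i, j) + a * (if i = j then 1 else 0)"
    using V i j by simp
  also have "\<dots> = (\<Sum>k<n. V $$ (i, k) * f k * V $$ (j, k)) + a * (\<Sum>k<n. V $$ (i, k) * V $$ (j, k))"
    by (simp only: index_mult_diag_mat_of_transpose[OF V i j] orthogonal_mat_row_inner[OF V orth i j])
  also have "\<dots> = (V * diag_mat_of n (\<lambda>k. f k + a) * transpose_mat V) $$ (i, j)"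
    unfolding index_mult_diag_mat_of_transpose[OF V i j] sum_distrib_left sum.distrib[symmetric]
    by (intro sum.cong refl) (simp add: algebra_simps)
  finally show "(V * diag_mat_of n f * transpose_mat V + a \<cdot>\<^sub>m 1\<^sub>m n) $$ (i, j)
      = (V * diag_mat_of n (\<lambda>k. f k + a) * transpose_mat V) $$ (i, j)" .
qed (use V in auto)

lemma ones_form_mult_diag_mat_of_transpose:
  assumes V: "V \<in> carrier_mat n n"
  shows "ones_form (V * diag_mat_of n f * transpose_mat V) = (\<Sum>k<n. f k * (\<Sum>i<n. V $$ (i, k))\<^sup>2)"
proof -
  have "dim_row (V * diag_mat_of n f * transpose_mat V) = n" "dim_col (V * diag_mat_of n f * transpose_mat V) = n"
    using V by auto
  hence "ones_form (V * diag_mat_of n f * transpose_mat V) = (\<Sum>i<n. \<Sum>j<n. (V * diag_mat_of n f * transpose_mat V) $$ (i, j))"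
    unfolding ones_form_def by simp
  also have "\<dots> = (\<Sum>i<n. \<Sum>j<n. \<Sum>k<n. V $$ (i, k) * f k * V $$ (j, k))"
    by (intro sum.cong refl) (simp add: index_mult_diag_mat_of_transpose[OF V])
  also have "\<dots> = (\<Sum>i<n. \<Sum>k<n. \<Sum>j<n. V $$ (i, k) * f k * V $$ (j, k))"
    by (rule sum.cong, simp, rule sum.swap)
  also have "\<dots> = (\<Sum>k<n. \<Sum>i<n. \<Sum>j<n. V $$ (i, k) * f k * V $$ (j, k))"
    by (rule sum.swap)
  also have "\<dots> = (\<Sum>k<n. f k * (\<Sum>i<n. V $$ (i, k))\<^sup>2)"
    by (intro sum.cong refl)
      (simp add: power2_eq_square sum_distrib_left sum_distrib_right mult.commute mult.left_commute)
  finally show ?thesis .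
qed

lemma orthogonal_diag_mult_col:
  fixes V :: "'a::comm_ring_1 mat"
  assumes V: "V \<in> carrier_mat n n" and orth: "transpose_mat V * V = 1\<^sub>m n" and p: "p < n"
  shows "(V * diag_mat_of n f * transpose_mat V) *\<^sub>v col V p = f p \<cdot>\<^sub>v col V p"
proof (rule eq_vecI)
  define X where "X = V * diag_mat_of n f * transpose_mat V"
  fix i assume "i < dim_vec (f p \<cdot>\<^sub>v col V p)"
  hence i: "i < n" using V by simp
  have "X \<in> carrier_mat n n" unfolding X_def by (rule carrier_matI) (use V in auto)
  hence "(X *\<^sub>v col V p) $ i = (\<Sum>j<n. X $$ (i, j) * V $$ (j, p))"
    using V i p by (auto simp: scalar_prod_def atLeast0LessThan intro!: sum.cong)
  also have "\<dots> = (\<Sum>j<n. (\<Sum>k<n. V $$ (i, k) * f k * V $$ (j, k)) * V $$ (j, p))"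
    by (intro sum.cong refl) (simp add: X_def index_mult_diag_mat_of_transpose[OF V i])
  also have "\<dots> = (\<Sum>j<n. \<Sum>k<n. V $$ (i, k) * f k * (V $$ (j, k) * V $$ (j, p)))"
    by (simp add: sum_distrib_right mult.assoc)
  also have "\<dots> = (\<Sum>k<n. \<Sum>j<n. V $$ (i, k) * f k * (V $$ (j, k) * V $$ (j, p)))"
    by (rule sum.swap)
  also have "\<dots> = (\<Sum>k<n. V $$ (i, k) * f k * (if k = p then 1 else 0))"
    by (rule sum.cong, simp, simp add: sum_distrib_left[symmetric] orthogonal_mat_col_inner[OF V orth _ p])
  also have "\<dots> = (f p \<cdot>\<^sub>v col V p) $ i"
    using V i p by (simp add: if_distrib sum.delta' mult.commute cong: if_cong)
  finally show "((V * diag_mat_of n f * transpose_mat V) *\<^sub>v col V p) $ i = (f p \<cdot>\<^sub>v col V p) $ i"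
    unfolding X_def .
qed (use V in auto)

lemma frobenius_norm_orthogonal_diag:
  assumes V: "V \<in> carrier_mat n n" and orth: "transpose_mat V * V = 1\<^sub>m n"
  shows "frobenius_norm (V * diag_mat_of n f * transpose_mat V) = sqrt (\<Sum>k<n. (f k)\<^sup>2)"
proof -
  define X where "X = V * diag_mat_of n f * transpose_mat V"
  have X: "X $$ (i, j) = (\<Sum>k<n. V $$ (i, k) * f k * V $$ (j, k))" if "i < n" "j < n" for i j
    unfolding X_def using index_mult_diag_mat_of_transpose[OF V that] .
  have XV: "(\<Sum>j<n. X $$ (i, j) * V $$ (j, k)) = V $$ (i, k) * f k" if i: "i < n" and k: "k < n" for i k
  proof -
    have "X \<in> carrier_mat n n" unfolding X_def by (rule carrier_matI) (use V in auto)
    hence "(\<Sum>j<n. X $$ (i, j) * V $$ (j, k)) = (X *\<^sub>v col V k) $ i"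
      using V i k by (auto simp: scalar_prod_def atLeast0LessThan intro!: sum.cong)
    also have "\<dots> = V $$ (i, k) * f k"
      unfolding X_def orthogonal_diag_mult_col[OF V orth k] using V i k by simp
    finally show ?thesis .
  qed
  have "(\<Sum>i<n. \<Sum>j<n. (X $$ (i, j))\<^sup>2) = (\<Sum>i<n. \<Sum>j<n. X $$ (i, j) * (\<Sum>k<n. V $$ (i, k) * f k * V $$ (j, k)))"
    unfolding power2_eq_square by (simp add: X)
  also have "\<dots> = (\<Sum>i<n. \<Sum>k<n. V $$ (i, k) * f k * (\<Sum>j<n. X $$ (i, j) * V $$ (j, k)))"
    by (rule sum.cong, simp, subst sum_distrib_left, subst sum.swap)
      (simp add: sum_distrib_left mult.commute mult.left_commute)
  also have "\<dots> = (\<Sum>i<n. \<Sum>k<n. (f k)\<^sup>2 * (V $$ (i, k))\<^sup>2)"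
    by (intro sum.cong refl) (simp add: XV power2_eq_square)
  also have "\<dots> = (\<Sum>k<n. (f k)\<^sup>2 * (\<Sum>i<n. V $$ (i, k) * V $$ (i, k)))"
    by (subst sum.swap) (simp add: sum_distrib_left power2_eq_square)
  also have "\<dots> = (\<Sum>k<n. (f k)\<^sup>2)"
    by (intro sum.cong refl) (simp add: orthogonal_mat_col_inner[OF V orth])
  finally show ?thesis
    unfolding frobenius_norm_def X_def[symmetric] using V by (simp add: X_def)
qed

lemma ones_form_one_mat: "ones_form (1\<^sub>m n) = real n"
  unfolding ones_form_def by (simp add: sum.delta)

lemma ones_form_add_smult_one:
  assumes "A \<in> carrier_mat n n"
  shows "ones_form (A + a \<cdot>\<^sub>m 1\<^sub>m n) = ones_form A + real n * a"
proof -
  have "ones_form (A + a \<cdot>\<^sub>m 1\<^sub>m n) = (\<Sum>i<n. \<Sum>j<n. A $$ (i, j) + (if i = j then a else 0))"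
    unfolding ones_form_def using assms by (intro sum.cong) auto
  also have "\<dots> = ones_form A + real n * a"
    unfolding ones_form_def using assms by (simp add: sum.distrib sum.delta)
  finally show ?thesis .
qed

lemma orthogonal_mat_col_sums_square_sum:
  fixes V :: "real mat"
  assumes V: "V \<in> carrier_mat n n" and orth: "transpose_mat V * V = 1\<^sub>m n"
  shows "(\<Sum>k<n. (\<Sum>i<n. V $$ (i, k))\<^sup>2) = real n"
proof -
  have "V * diag_mat_of n (\<lambda>_. 1) * transpose_mat V = 1\<^sub>m n"
    using mat_mult_left_right_inverse[of "transpose_mat V" n V] V orth
    by (simp add: diag_mat_of_one)
  thus ?thesis
    using ones_form_mult_diag_mat_of_transpose[OF V, of "\<lambda>_. 1"] by (simp add: ones_form_one_mat)
qed

lemma char_poly_orthogonal_diag: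
  fixes V :: "'a::field mat"
  assumes V: "V \<in> carrier_mat n n" and orth: "transpose_mat V * V = 1\<^sub>m n"
  shows "char_poly (V * diag_mat_of n f * transpose_mat V) = (\<Prod>a\<leftarrow>map f [0..<n]. [:- a, 1:])"
proof -
  have "V * transpose_mat V = 1\<^sub>m n"
    by (rule mat_mult_left_right_inverse[of "transpose_mat V" n V]) (use V orth in auto)
  hence "similar_mat (V * diag_mat_of n f * transpose_mat V) (diag_mat_of n f)"
    unfolding similar_mat_def similar_mat_wit_def
    by (intro exI[of _ V] exI[of _ "transpose_mat V"]) (use V orth in \<open>auto simp: Let_def\<close>)
  thus ?thesis using char_poly_similar char_poly_diag_mat_of by metis
qed

lemma eigenvalue_orthogonal_diag_iff:
  fixes V :: "'a::field mat"
  assumes V: "V \<in> carrier_mat n n" and orth: "transpose_mat V * V = 1\<^sub>m n"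
  shows "eigenvalue (V * diag_mat_of n f * transpose_mat V) r \<longleftrightarrow> (\<exists>i<n. f i = r)"
proof -
  have X: "V * diag_mat_of n f * transpose_mat V \<in> carrier_mat n n" by (rule carrier_matI) (use V in auto)
  show ?thesis
    unfolding eigenvalue_root_char_poly[OF X] char_poly_orthogonal_diag[OF V orth]
      poly_prod_list_zero_iff by auto
qed

lemma order_char_poly_orthogonal_diag:
  fixes V :: "'a::field mat"
  assumes V: "V \<in> carrier_mat n n" and orth: "transpose_mat V * V = 1\<^sub>m n"
  shows "order r (char_poly (V * diag_mat_of n f * transpose_mat V)) = card {i. i < n \<and> f i = r}"
proof -
  have "order r (char_poly (V * diag_mat_of n f * transpose_mat V))
      = sum_list (map (\<lambda>i. if f i = r then 1 else 0) [0..<n])"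
    unfolding char_poly_orthogonal_diag[OF V orth]
    by (subst order_prod_list) (auto simp: order_linear' o_def)
  also have "\<dots> = (\<Sum>i<n. of_bool (f i = r))"
    by (simp add: sum_set_upt_conv_sum_list_nat[symmetric] atLeast0LessThan of_bool_def)
  also have "\<dots> = card {i. i < n \<and> f i = r}"
    by (simp add: Collect_conj_eq lessThan_def)
  finally show ?thesis .
qed

section \<open>The eigenvalue inequality\<close>

lemma square_sum_less_twice_sum_squares:
  fixes a b :: real
  assumes "a \<noteq> b"
  shows "(a + b)\<^sup>2 < 2 * (a\<^sup>2 + b\<^sup>2)"
proof -
  have "0 < (a - b)\<^sup>2" using assms by simp
  thus ?thesis by (simp add: power2_eq_square algebra_simps)
qed

lemma top_le_rest_weight_bound:
  fixes M R N s :: real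
  assumes MR: "M \<le> R" and N: "0 \<le> N" and Ns: "N\<^sup>2 < 2 * s" and G: "0 < M\<^sup>2 + R\<^sup>2"
  shows "M * N < sqrt (s * (M\<^sup>2 + R\<^sup>2))"
proof (cases "M \<le> 0")
  case True
  have "0 < s" using Ns by (smt (verit) zero_le_power2)
  hence "0 < sqrt (s * (M\<^sup>2 + R\<^sup>2))" using G by simp
  moreover have "M * N \<le> 0" using True N by (simp add: mult_nonpos_nonneg)
  ultimately show ?thesis by linarith
next
  case False
  hence "M\<^sup>2 \<le> (M\<^sup>2 + R\<^sup>2) / 2" using MR by (simp add: power_mono)
  hence "(M * N)\<^sup>2 \<le> (M\<^sup>2 + R\<^sup>2) / 2 * N\<^sup>2" unfolding power_mult_distrib by (rule mult_right_mono) simp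
  also have "\<dots> < (M\<^sup>2 + R\<^sup>2) / 2 * (2 * s)" using Ns G by (intro mult_strict_left_mono) auto
  finally show ?thesis by (intro real_less_rsqrt) (simp add: mult.commute)
qed

lemma two_level_weight_bound:
  fixes M R t :: real and n k :: nat
  assumes nk: "2 * k < n" and RM: "R < M" and t: "0 \<le> t" "t < real n - real k"
  shows "M * t + R * (real n - t) < sqrt (((real n - real k)\<^sup>2 + (real k)\<^sup>2) * (M\<^sup>2 + R\<^sup>2))"
proof -
  define s where "s = (real n - real k)\<^sup>2 + (real k)\<^sup>2"
  have G: "0 < M\<^sup>2 + R\<^sup>2" using RM by (auto simp: sum_power2_gt_zero_iff)
  have ns: "(real n)\<^sup>2 < 2 * s"
    using square_sum_less_twice_sum_squares[of "real n - real k" "real k"] nk unfolding s_def by simp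
  have "M * t + R * (real n - t) < sqrt (s * (M\<^sup>2 + R\<^sup>2))"
  proof (cases "t \<le> real k")
    case True
    \<comment> \<open>the weight on \<open>M\<close> is at most \<open>n / 2\<close>\<close>
    have "M * t + R * (real n - t) \<le> (M - R) * real k + R * real n"
      using mult_left_mono[OF True, of "M - R"] RM by (simp add: algebra_simps)
    also have "\<dots> \<le> real n * (M + R) / 2"
      using mult_left_mono[of "2 * real k" "real n" "M - R"] nk RM by (simp add: algebra_simps)
    also have "\<dots> < sqrt (s * (M\<^sup>2 + R\<^sup>2))"
    proof (rule real_less_rsqrt)
      have "(M + R)\<^sup>2 \<le> 2 * (M\<^sup>2 + R\<^sup>2)"
        using zero_le_power2[of "M - R"] by (simp add: power2_eq_square algebra_simps)
      hence "(real n)\<^sup>2 * (M + R)\<^sup>2 \<le> (real n)\<^sup>2 * (2 * (M\<^sup>2 + R\<^sup>2))" by (rule mult_left_mono) simp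
      also have "\<dots> < (2 * s) * (2 * (M\<^sup>2 + R\<^sup>2))" using ns G by (intro mult_strict_right_mono) auto
      also have "\<dots> = 4 * (s * (M\<^sup>2 + R\<^sup>2))" by simp
      finally have "(real n)\<^sup>2 * (M + R)\<^sup>2 < 4 * (s * (M\<^sup>2 + R\<^sup>2))" .
      moreover have "(real n * (M + R) / 2)\<^sup>2 = (real n)\<^sup>2 * (M + R)\<^sup>2 / 4"
        by (simp add: power_mult_distrib power_divide)
      ultimately show "(real n * (M + R) / 2)\<^sup>2 < s * (M\<^sup>2 + R\<^sup>2)" by linarith
    qed
    finally show ?thesis .
  next
    case False
    \<comment> \<open>Cauchy--Schwarz, then \<open>s - t\<^sup>2 - (n - t)\<^sup>2 = 2 (t - k) (n - k - t) > 0\<close>\<close>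
    have "(M * t + R * (real n - t))\<^sup>2 \<le> (t\<^sup>2 + (real n - t)\<^sup>2) * (M\<^sup>2 + R\<^sup>2)"
      using zero_le_power2[of "M * (real n - t) - R * t"] by (simp add: power2_eq_square algebra_simps)
    also have "\<dots> < s * (M\<^sup>2 + R\<^sup>2)"
    proof (rule mult_strict_right_mono[OF _ G])
      have "0 < (t - real k) * (real n - real k - t)" using False t by (intro mult_pos_pos) auto
      thus "t\<^sup>2 + (real n - t)\<^sup>2 < s" unfolding s_def by (simp add: power2_eq_square algebra_simps)
    qed
    finally show ?thesis by (rule real_less_rsqrt)
  qed
  thus ?thesis unfolding s_def .
qed

lemma weighted_sum_le_two_level:
  fixes \<nu> c :: "nat \<Rightarrow> real" and n p :: nat
  assumes c_sum: "(\<Sum>i<n. (c i)\<^sup>2) = real n" and p: "p < n"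
    and rest: "\<And>i. i < n \<Longrightarrow> i \<noteq> p \<Longrightarrow> \<nu> i \<le> R"
  shows "(\<Sum>i<n. \<nu> i * (c i)\<^sup>2) \<le> \<nu> p * (c p)\<^sup>2 + R * (real n - (c p)\<^sup>2)"
proof -
  have c_rest: "(\<Sum>i\<in>{..<n} - {p}. (c i)\<^sup>2) = real n - (c p)\<^sup>2"
    using c_sum p by (simp add: sum.remove)
  have "(\<Sum>i<n. \<nu> i * (c i)\<^sup>2) = \<nu> p * (c p)\<^sup>2 + (\<Sum>i\<in>{..<n} - {p}. \<nu> i * (c i)\<^sup>2)"
    using p by (simp add: sum.remove)
  also have "(\<Sum>i\<in>{..<n} - {p}. \<nu> i * (c i)\<^sup>2) \<le> (\<Sum>i\<in>{..<n} - {p}. R * (c i)\<^sup>2)"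
    by (intro sum_mono mult_right_mono) (auto simp: rest)
  finally show ?thesis unfolding sum_distrib_left[symmetric] c_rest by simp
qed

lemma weighted_bound_forces_dominant_index:
  fixes \<nu> c :: "nat \<Rightarrow> real" and n k p :: nat
  assumes nk: "2 * k < n" and c_sum: "(\<Sum>i<n. (c i)\<^sup>2) = real n" and \<nu>_pos: "0 < (\<Sum>i<n. (\<nu> i)\<^sup>2)"
    and bound: "sqrt (((real n - real k)\<^sup>2 + (real k)\<^sup>2) * (\<Sum>i<n. (\<nu> i)\<^sup>2)) \<le> (\<Sum>i<n. \<nu> i * (c i)\<^sup>2)"
    and p: "p < n" and max: "\<And>i. i < n \<Longrightarrow> \<nu> i \<le> \<nu> p"
  shows "\<forall>i<n. i \<noteq> p \<longrightarrow> \<nu> i < \<nu> p" and "real n - real k \<le> (c p)\<^sup>2"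
proof -
  define s where "s = (real n - real k)\<^sup>2 + (real k)\<^sup>2"
  define S where "S = (\<Sum>i<n. \<nu> i * (c i)\<^sup>2)"
  define M where "M = \<nu> p"
  define Q where "Q = (\<Sum>i\<in>{..<n} - {p}. (\<nu> i)\<^sup>2)"
  define R where "R = sqrt Q"
  define t where "t = (c p)\<^sup>2"
  have Q: "0 \<le> Q" unfolding Q_def by (simp add: sum_nonneg)
  have G: "(\<Sum>i<n. (\<nu> i)\<^sup>2) = M\<^sup>2 + R\<^sup>2"
    unfolding M_def R_def using p Q by (simp add: Q_def sum.remove)
  have ns: "(real n)\<^sup>2 < 2 * s"
    using square_sum_less_twice_sum_squares[of "real n - real k" "real k"] nk unfolding s_def by simp
  have S_bound: "sqrt (s * (M\<^sup>2 + R\<^sup>2)) \<le> S" using bound unfolding s_def S_def G .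
  have rest: "\<nu> i \<le> R" if "i < n" "i \<noteq> p" for i
    unfolding R_def Q_def by (rule real_le_rsqrt, rule member_le_sum) (use that in auto)
  have S_top: "S \<le> M * real n"
  proof -
    have "S \<le> (\<Sum>i<n. M * (c i)\<^sup>2)"
      unfolding S_def M_def by (intro sum_mono mult_right_mono) (auto simp: max)
    thus ?thesis unfolding sum_distrib_left[symmetric] c_sum .
  qed
  have S_split: "S \<le> M * t + R * (real n - t)"
    unfolding S_def M_def t_def by (rule weighted_sum_le_two_level[OF c_sum p rest])
  have MR: "R < M"
  proof (rule ccontr)
    assume "\<not> R < M"
    hence "M * real n < sqrt (s * (M\<^sup>2 + R\<^sup>2))"
      using ns \<nu>_pos G by (intro top_le_rest_weight_bound) auto
    with S_top S_bound show False by simp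
  qed
  show "\<forall>i<n. i \<noteq> p \<longrightarrow> \<nu> i < \<nu> p"
    using rest max MR unfolding M_def by (meson le_less_trans not_le order.antisym)
  show "real n - real k \<le> (c p)\<^sup>2"
  proof (rule ccontr)
    assume "\<not> real n - real k \<le> (c p)\<^sup>2"
    hence "M * t + R * (real n - t) < sqrt (s * (M\<^sup>2 + R\<^sup>2))"
      unfolding s_def t_def by (intro two_level_weight_bound[OF nk MR]) auto
    with S_split S_bound show False by simp
  qed
qed

lemma card_nonneg_entries_of_unit_vector:
  fixes v :: "nat \<Rightarrow> real" and n k :: nat
  assumes unit: "(\<Sum>i<n. (v i)\<^sup>2) = 1" and nonneg: "0 \<le> (\<Sum>i<n. v i)"
    and large: "real n - real k \<le> (\<Sum>i<n. v i)\<^sup>2" and k: "1 \<le> k" "k < n"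
  shows "n - k + 1 \<le> card {i. i < n \<and> 0 \<le> v i}"
proof (rule ccontr)
  define P where "P = {i. i < n \<and> 0 \<le> v i}"
  assume "\<not> n - k + 1 \<le> card {i. i < n \<and> 0 \<le> v i}"
  hence card_P: "card P \<le> n - k" unfolding P_def by simp
  have P: "P \<subseteq> {..<n}" unfolding P_def by auto
  \<comment> \<open>some entry is negative, so dropping the negative entries increases the sum\<close>
  have "P \<noteq> {..<n}" using card_P k by auto
  then obtain j where "j \<in> {..<n} - P" using P by blast
  hence j: "j < n" "v j < 0" unfolding P_def by auto
  have "(\<Sum>i<n. v i) = (\<Sum>i\<in>P. v i) + (\<Sum>i\<in>{..<n} - P. v i)"
    using P by (simp add: sum.subset_diff)
  also have "(\<Sum>i\<in>{..<n} - P. v i) < 0"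
  proof -
    have "0 < (\<Sum>i\<in>{..<n} - P. - v i)"
      by (rule sum_pos2[of _ j]) (use j in \<open>auto simp: P_def\<close>)
    thus ?thesis by (simp add: sum_negf)
  qed
  finally have "(\<Sum>i<n. v i)\<^sup>2 < (\<Sum>i\<in>P. v i)\<^sup>2"
    using nonneg by (intro power_strict_mono) auto
  also have "\<dots> \<le> (\<Sum>i\<in>P. (v i)\<^sup>2) * real (card P)"
    by (rule sum_squared_le_sum_of_squares)
  also have "\<dots> \<le> 1 * real (n - k)"
  proof (rule mult_mono)
    show "(\<Sum>i\<in>P. (v i)\<^sup>2) \<le> 1" unfolding unit[symmetric] by (rule sum_mono2) (use P in auto)
  qed (use card_P in auto)
  finally show False using large k by simp
qed

lemma ones_form_bound_forces_dominant_eigenvalue: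
  fixes V :: "real mat" and \<nu> :: "nat \<Rightarrow> real" and n k p :: nat
  defines "B \<equiv> V * diag_mat_of n \<nu> * transpose_mat V"
  assumes V: "V \<in> carrier_mat n n" and orth: "transpose_mat V * V = 1\<^sub>m n"
    and nk: "2 * k < n" and B0: "B \<noteq> 0\<^sub>m n n"
    and bound: "sqrt ((real n - real k)\<^sup>2 + (real k)\<^sup>2) * frobenius_norm B \<le> ones_form B"
    and p: "p < n" and max: "\<And>i. i < n \<Longrightarrow> \<nu> i \<le> \<nu> p"
  shows "\<forall>i<n. i \<noteq> p \<longrightarrow> \<nu> i < \<nu> p" and "real n - real k \<le> (\<Sum>i<n. V $$ (i, p))\<^sup>2"
proof -
  have "\<exists>i<n. \<nu> i \<noteq> 0"
  proof (rule ccontr)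
    assume "\<not> (\<exists>i<n. \<nu> i \<noteq> 0)"
    hence "diag_mat_of n \<nu> = 0\<^sub>m n n" by (intro eq_matI) auto
    with B0 V show False unfolding B_def by simp
  qed
  hence "0 < (\<Sum>i<n. (\<nu> i)\<^sup>2)" by (metis lessThan_iff finite_lessThan sum_pos2 zero_le_power2 zero_less_power2)
  then show "\<forall>i<n. i \<noteq> p \<longrightarrow> \<nu> i < \<nu> p" and "real n - real k \<le> (\<Sum>i<n. V $$ (i, p))\<^sup>2"
    using bound weighted_bound_forces_dominant_index[OF nk orthogonal_mat_col_sums_square_sum[OF V orth], of \<nu> p] p max
    unfolding B_def frobenius_norm_orthogonal_diag[OF V orth] ones_form_mult_diag_mat_of_transpose[OF V]
    by (simp_all add: real_sqrt_mult)
qed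

lemma simple_top_eigenvalue_of_orthogonal_diag:
  fixes V :: "real mat" and \<mu> :: "nat \<Rightarrow> real" and n k p :: nat
  defines "A \<equiv> V * diag_mat_of n \<mu> * transpose_mat V"
  assumes V: "V \<in> carrier_mat n n" and orth: "transpose_mat V * V = 1\<^sub>m n"
    and p: "p < n" and top: "\<forall>i<n. i \<noteq> p \<longrightarrow> \<mu> i < \<mu> p"
    and k: "1 \<le> k" "k < n" and col_sum: "real n - real k \<le> (\<Sum>i<n. V $$ (i, p))\<^sup>2"
  shows "\<exists>r. eigenvalue A r \<and> (\<forall>m. eigenvalue A m \<longrightarrow> m \<le> r)
            \<and> order r (char_poly A) = 1
            \<and> (\<exists>v. eigenvector A v r \<and> card {i. i < n \<and> v $ i \<ge> 0} \<ge> n - k + 1)"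
proof (intro exI conjI allI impI)
  have A: "A \<in> carrier_mat n n" unfolding A_def by (rule carrier_matI) (use V in auto)
  \<comment> \<open>the sign is chosen so that the entries of the eigenvector have a nonnegative sum\<close>
  define \<sigma> :: real where "\<sigma> = (if 0 \<le> (\<Sum>i<n. V $$ (i, p)) then 1 else -1)"
  define w where "w = \<sigma> \<cdot>\<^sub>v col V p"
  have col: "col V p \<in> carrier_vec n" unfolding carrier_vec_def using V by simp
  hence w: "w \<in> carrier_vec n" unfolding w_def by simp
  have w_unit: "(\<Sum>i<n. (w $ i)\<^sup>2) = 1"
    using orthogonal_mat_col_inner[OF V orth p p] V p unfolding w_def \<sigma>_def
    by (simp add: power2_eq_square)
  have "w \<noteq> 0\<^sub>v n" using w_unit by auto
  moreover have "A *\<^sub>v w = \<sigma> \<cdot>\<^sub>v (A *\<^sub>v col V p)"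
    unfolding w_def by (rule mult_mat_vec[OF A col])
  hence "A *\<^sub>v w = \<mu> p \<cdot>\<^sub>v w"
    unfolding A_def orthogonal_diag_mult_col[OF V orth p] w_def by (simp add: smult_smult_assoc mult.commute)
  ultimately show "eigenvector A w (\<mu> p)" unfolding eigenvector_def using A w by simp
  thus "eigenvalue A (\<mu> p)" unfolding eigenvalue_def by blast
  show "m \<le> \<mu> p" if "eigenvalue A m" for m
    using that top p unfolding A_def eigenvalue_orthogonal_diag_iff[OF V orth] by (metis order.refl less_imp_le)
  have "{i. i < n \<and> \<mu> i = \<mu> p} = {p}" using top p by force
  thus "order (\<mu> p) (char_poly A) = 1" unfolding A_def order_char_poly_orthogonal_diag[OF V orth] by simp
  have w_sum: "(\<Sum>i<n. w $ i) = \<sigma> * (\<Sum>i<n. V $$ (i, p))"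
    unfolding w_def using V p by (auto simp: sum_distrib_left intro!: sum.cong)
  show "n - k + 1 \<le> card {i. i < n \<and> 0 \<le> w $ i}"
    by (rule card_nonneg_entries_of_unit_vector[OF w_unit _ _ k])
      (use col_sum in \<open>auto simp: w_sum \<sigma>_def power_mult_distrib\<close>)
qed

theorem corollary7:
  fixes A :: "real mat" and n k :: nat and \<alpha> :: real
  assumes "A \<in> carrier_mat n n"
    and "transpose_mat A = A"
    and "A + \<alpha> \<cdot>\<^sub>m 1\<^sub>m n \<noteq> 0\<^sub>m n n"
    and "1 \<le> k" and "2 * k < n"
    and "ones_form A \<ge> sqrt ((real n - real k)\<^sup>2 + (real k)\<^sup>2) * frobenius_norm (A + \<alpha> \<cdot>\<^sub>m 1\<^sub>m n) - real n * \<alpha>"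
  shows "\<exists>r. eigenvalue A r \<and> (\<forall>m. eigenvalue A m \<longrightarrow> m \<le> r)
            \<and> order r (char_poly A) = 1
            \<and> (\<exists>v. eigenvector A v r \<and> card {i. i < n \<and> v $ i \<ge> 0} \<ge> n - k + 1)"
proof -
  obtain V \<mu> where V: "V \<in> carrier_mat n n" and orth: "transpose_mat V * V = 1\<^sub>m n"
    and A: "A = V * diag_mat_of n \<mu> * transpose_mat V"
    using real_symmetric_orthogonal_diagonalization[OF assms(1,2)] by blast
  obtain p where p: "p < n" and max: "\<And>i. i < n \<Longrightarrow> \<mu> i \<le> \<mu> p"
  proof -
    obtain p where "p < n" "\<mu> p = Max (\<mu> ` {..<n})"
      using Max_in[of "\<mu> ` {..<n}"] assms(5) by fastforce
    thus ?thesis using that by (metis Max_ge finite_imageI finite_lessThan image_eqI lessThan_iff)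
  qed
  have shift: "A + \<alpha> \<cdot>\<^sub>m 1\<^sub>m n = V * diag_mat_of n (\<lambda>i. \<mu> i + \<alpha>) * transpose_mat V"
    unfolding A by (rule orthogonal_diag_add_smult_one[OF V orth])
  have "sqrt ((real n - real k)\<^sup>2 + (real k)\<^sup>2) * frobenius_norm (A + \<alpha> \<cdot>\<^sub>m 1\<^sub>m n) \<le> ones_form (A + \<alpha> \<cdot>\<^sub>m 1\<^sub>m n)"
    using assms(6) ones_form_add_smult_one[OF assms(1)] by simp
  from ones_form_bound_forces_dominant_eigenvalue[OF V orth assms(5) assms(3)[unfolded shift] this[unfolded shift] p]
  have "\<forall>i<n. i \<noteq> p \<longrightarrow> \<mu> i < \<mu> p" and "real n - real k \<le> (\<Sum>i<n. V $$ (i, p))\<^sup>2"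
    using max by auto
  thus ?thesis
    unfolding A using simple_top_eigenvalue_of_orthogonal_diag[OF V orth p] assms(4,5) by simp
qed

end
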